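(* Let $m,d$ be positive integers, $k$ a field, and in $A=k[x_1,x_2,x_3,x_4]$ let $g_1=-x_1^{4m+d+2}+x_2x_4^{m}$, $g_2=x_1^{5}x_4-x_2^{3}x_3$, $g_3=x_1^{4m+d-1}x_2^{2}-x_3x_4^{m}$. Then $g_1,g_2,g_3$ is a regular sequence in $A$. *)

theory Defs
  imports "HOL-Computational_Algebra.Polynomial"
begin

text \<open>The polynomial ring k[x1,x2,x3,x4] is represented as the iterated univariate
polynomial ring ((((k[x1])[x2])[x3])[x4]), i.e. type 'k poly poly poly poly.\<close>

type_synonym 'k mpoly4 = "'k poly poly poly poly"

definition X1 :: "'k::comm_ring_1 mpoly4" where
  "X1 = [:[:[:[:0, 1:]:]:]:]"
definition X2 :: "'k::comm_ring_1 mpoly4" where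
  "X2 = [:[:[:0, 1:]:]:]"
definition X3 :: "'k::comm_ring_1 mpoly4" where
  "X3 = [:[:0, 1:]:]"
definition X4 :: "'k::comm_ring_1 mpoly4" where
  "X4 = [:0, 1:]"

definition gen_ideal :: "'a::comm_ring_1 list \<Rightarrow> 'a set" where
  "gen_ideal gs = {\<Sum>i<length gs. c i * gs ! i | c. True}"

definition regular_sequence :: "'a::comm_ring_1 list \<Rightarrow> bool" where
  "regular_sequence gs \<longleftrightarrow>
     (\<forall>j<length gs. \<forall>a. a * gs ! j \<in> gen_ideal (take j gs) \<longrightarrow> a \<in> gen_ideal (take j gs))
     \<and> 1 \<notin> gen_ideal gs"

end

theory Submission
  imports Defs "HOL-Computational_Algebra.Polynomial_Factorial"
begin

(* Write K = 4m + d - 1, so that g1 = x2 x4^m - x1^(K+3).  Since A is a domain, g1 is regular.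
   Modulo x4 the generators become -x1^(K+3) and -x2^3 x3, which have no common prime factor;
   hence x4 is a nonzerodivisor on A/(g1) and on A/(g1, g2).  It therefore suffices to work in
   A[1/x4]/(g1) = k[x1, x3, x4, 1/x4], i.e. to substitute x2 = x1^(K+3) / x4^m.  There g2 and g3
   become, up to powers of x4, the polynomials x1^5 r2 and r3 with
   r2 = x4^(3m+1) - x1^(3K+4) x3 and r3 = x1^(3K+6) - x3 x4^(3m).  Both r2 (linear in x3 with
   coefficients coprime over k[x1, x4]) and x1 are prime, and neither divides r3 x4^j; so g2 is
   a nonzerodivisor modulo g1 and g3 one modulo (g1, g2).  Finally every gi vanishes at the
   origin, so (g1, g2, g3) is a proper ideal. *)

section \<open>Ring homomorphisms and polynomial evaluation\<close>

locale comm_ring_hom =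
  fixes f :: "'a::comm_ring_1 \<Rightarrow> 'b::comm_ring_1"
  assumes hom_1 [simp]: "f 1 = 1"
    and hom_add [simp]: "f (x + y) = f x + f y"
    and hom_mult [simp]: "f (x * y) = f x * f y"
begin

lemma hom_0 [simp]: "f 0 = 0"
  using hom_add[of 0 0] by simp

lemma hom_uminus [simp]: "f (- x) = - f x"
  using hom_add[of x "- x"] by (simp add: eq_neg_iff_add_eq_0 add.commute)

lemma hom_diff [simp]: "f (x - y) = f x - f y"
  using hom_add[of x "- y"] by simp

lemma hom_power [simp]: "f (x ^ n) = f x ^ n"
  by (induction n) simp_all

end

definition eval_poly :: "('a::comm_ring_1 \<Rightarrow> 'b::comm_ring_1) \<Rightarrow> 'b \<Rightarrow> 'a poly \<Rightarrow> 'b" where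
  "eval_poly f y p = poly (map_poly f p) y"

context comm_ring_hom
begin

lemma eval_poly_0 [simp]: "eval_poly f y 0 = 0"
  by (simp add: eval_poly_def)

lemma eval_poly_pCons [simp]: "eval_poly f y (pCons a p) = f a + y * eval_poly f y p"
  by (simp add: eval_poly_def map_poly_pCons)

lemma eval_poly_add: "eval_poly f y (p + q) = eval_poly f y p + eval_poly f y q"
proof (induction p arbitrary: q)
  case (pCons a p)
  then show ?case by (cases q) (simp add: algebra_simps)
qed simp

lemma eval_poly_smult: "eval_poly f y (smult a p) = f a * eval_poly f y p"
  by (induction p) (simp_all add: algebra_simps)

lemma eval_poly_mult: "eval_poly f y (p * q) = eval_poly f y p * eval_poly f y q"
  by (induction p) (simp_all add: eval_poly_add eval_poly_smult algebra_simps)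

lemma comm_ring_hom_eval_poly: "comm_ring_hom (eval_poly f y)"
  by unfold_locales (simp_all add: eval_poly_add eval_poly_mult flip: pCons_one)

end

lemma poly_induct_ring [case_names const X add mult]:
  fixes P :: "'a::comm_ring_1 poly \<Rightarrow> bool"
  assumes const: "\<And>a. P [:a:]" and X: "P [:0, 1:]"
    and add: "\<And>p q. P p \<Longrightarrow> P q \<Longrightarrow> P (p + q)"
    and mult: "\<And>p q. P p \<Longrightarrow> P q \<Longrightarrow> P (p * q)"
  shows "P p"
proof (induction p)
  case 0
  show ?case using const[of 0] by simp
next
  case (pCons a p)
  have "pCons a p = [:a:] + [:0, 1:] * p" by simp
  with add[OF const mult[OF X pCons.IH]] show ?case by simp
qed

section \<open>Divisibility in polynomial rings\<close>

lemma prime_elem_X: "prime_elem ([:0, 1:] :: 'a::idom poly)"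
proof (rule prime_elemI)
  show "\<not> [:0, 1:] dvd (1 :: 'a poly)"
    using dvd_imp_degree_le[of "[:0, 1:]" "1 :: 'a poly"] by auto
next
  fix a b :: "'a poly"
  assume "[:0, 1:] dvd a * b"
  then show "[:0, 1:] dvd a \<or> [:0, 1:] dvd b"
    using dvd_iff_poly_eq_0[of 0 a] dvd_iff_poly_eq_0[of 0 b] dvd_iff_poly_eq_0[of 0 "a * b"]
    by simp
qed simp

lemma const_poly_dvd_X_iff: "[:c:] dvd ([:0, 1:] :: 'a::idom poly) \<longleftrightarrow> c dvd 1"
  using const_poly_dvd_iff[of c "[:0, 1:]"] by (auto simp: coeff_pCons split: nat.splits)

lemma prime_elem_power_dvd_mult_cancel:
  fixes p :: "'a::idom"
  assumes p: "prime_elem p" and t: "\<not> p dvd t"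
  shows "p ^ n dvd a * t \<Longrightarrow> p ^ n dvd a"
proof (induction n arbitrary: a)
  case (Suc n)
  then have "p dvd a * t"
    by (meson dvd_power dvd_trans zero_less_Suc)
  with p t have "p dvd a"
    by (simp add: prime_elem_dvd_mult_iff)
  then obtain a' where a: "a = p * a'" ..
  from Suc.prems have "p * p ^ n dvd p * (a' * t)"
    by (simp add: a mult.assoc)
  with p have "p ^ n dvd a' * t"
    by (simp add: prime_elem_def)
  then have "p ^ n dvd a'"
    by (rule Suc.IH)
  then show ?case
    by (simp add: a)
qed simp

lemma dvd_mult_prime_elem_power_cancel:
  fixes p :: "'a::idom"
  assumes p: "prime_elem p" and h: "\<not> p dvd h" and "h dvd a * p ^ n"
  shows "h dvd a"
proof -
  obtain t where t: "a * p ^ n = h * t"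
    using assms(3) by blast
  then have "p ^ n dvd t * h"
    by (metis dvd_triv_right mult.commute)
  then obtain t' where "t = p ^ n * t'"
    using prime_elem_power_dvd_mult_cancel[OF p h] by blast
  with t p have "a = h * t'"
    by (simp add: prime_elem_def mult.left_commute)
  then show ?thesis by simp
qed

lemma dvd_X_power_mult_cancel:
  fixes g :: "'a::idom poly"
  assumes "poly g 0 \<noteq> 0" and "g dvd a * [:0, 1:] ^ n"
  shows "g dvd a"
proof (rule dvd_mult_prime_elem_power_cancel[OF prime_elem_X _ assms(2)])
  show "\<not> [:0, 1:] dvd g"
    using assms(1) dvd_iff_poly_eq_0[of 0 g] by simp
qed

lemma X_mult_in_ideal2_cancel:
  fixes g1 g2 :: "'a::idom poly"
  assumes G2: "poly g2 0 \<noteq> 0"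
    and regular: "\<And>x. poly g2 0 dvd x * poly g1 0 \<Longrightarrow> poly g2 0 dvd x"
    and eq: "[:0, 1:] * a = b * g1 + c * g2"
  shows "\<exists>b' c'. a = b' * g1 + c' * g2"
proof -
  have split: "\<exists>q. p = [:poly p 0:] + [:0, 1:] * q" for p :: "'a poly"
    by (cases p) auto
  define G1 G2 b0 c0 where "G1 = poly g1 0" and "G2 = poly g2 0" and "b0 = poly b 0" and "c0 = poly c 0"
  obtain h1 h2 b1 c1 where
    g1: "g1 = [:G1:] + [:0, 1:] * h1" and g2: "g2 = [:G2:] + [:0, 1:] * h2" and
    b: "b = [:b0:] + [:0, 1:] * b1" and c: "c = [:c0:] + [:0, 1:] * c1"
    unfolding G1_def G2_def b0_def c0_def by (metis split)
  have "b0 * G1 + c0 * G2 = 0"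
    using arg_cong[OF eq, of "\<lambda>p. poly p 0"] by (simp add: G1_def G2_def b0_def c0_def)
  then have "G2 dvd b0 * G1"
    by (metis add_eq_0_iff dvd_minus_iff dvd_triv_right)
  then obtain u where u: "b0 = G2 * u"
    using regular unfolding G1_def G2_def by blast
  with \<open>b0 * G1 + c0 * G2 = 0\<close> have "G2 * (G1 * u + c0) = 0"
    by (simp add: algebra_simps)
  with G2 have c0: "c0 = - (G1 * u)"
    by (simp add: G2_def eq_neg_iff_add_eq_0 add.commute)
  \<comment> \<open>the Koszul relation \<open>h1 g2 - h2 g1 = [:G2:] h1 - [:G1:] h2\<close> absorbs the constant terms\<close>
  have koszul: "(g2' * u' + x * b1) * (g1' + x * h1) + (- (g1' * u') + x * c1) * (g2' + x * h2)
      = x * ((b1 - u' * h2) * (g1' + x * h1) + (c1 + u' * h1) * (g2' + x * h2))"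
    for g1' g2' u' x :: "'a poly"
    by (simp add: algebra_simps)
  have const: "[:b0:] = [:G2:] * [:u:]" "[:c0:] = - ([:G1:] * [:u:])"
    by (simp_all add: u c0)
  have "[:0, 1:] * a = [:0, 1:] * ((b1 - [:u:] * h2) * g1 + (c1 + [:u:] * h1) * g2)"
    unfolding eq b c const g1 g2 by (rule koszul)
  then show ?thesis
    by auto
qed

lemma X_power_mult_in_ideal2_cancel:
  fixes g1 g2 :: "'a::idom poly"
  assumes "poly g2 0 \<noteq> 0"
    and "\<And>x. poly g2 0 dvd x * poly g1 0 \<Longrightarrow> poly g2 0 dvd x"
  shows "[:0, 1:] ^ n * a = b * g1 + c * g2 \<Longrightarrow> \<exists>b' c'. a = b' * g1 + c' * g2"
proof (induction n arbitrary: a b c)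
  case (Suc n)
  then have "[:0, 1:] * ([:0, 1:] ^ n * a) = b * g1 + c * g2"
    by (simp only: power_Suc mult.assoc)
  then obtain b' c' where "[:0, 1:] ^ n * a = b' * g1 + c' * g2"
    using X_mult_in_ideal2_cancel[OF assms] by blast
  then show ?case
    by (rule Suc.IH)
qed auto

lemma const_poly_power: "[:a:] ^ n = [:a ^ n:]"
  by (induction n) (simp_all add: pCons_one mult.commute)

lemma linear_poly_dvd_of_common_root:
  fixes r s :: "'a::idom poly"
  assumes deg: "degree r = 1" and p: "prime_elem p" and p_r: "\<not> [:p:] dvd r"
    and lc: "lead_coeff r dvd p ^ n"
    and root_r: "poly (fract_poly r) z = 0" and root_s: "poly (fract_poly s) z = 0"
  shows "r dvd s"
proof -
  have "r \<noteq> 0"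
    using deg by auto
  obtain q t where qt: "pseudo_divmod s r = (q, t)"
    by fastforce
  define k where "k = Suc (degree s) - degree r"
  have div: "[:lead_coeff r:] ^ k * s = r * q + t"
    using pseudo_divmod(1)[OF \<open>r \<noteq> 0\<close> qt] by (simp add: k_def const_poly_power)
  have "t = 0 \<or> degree t < 1"
    using pseudo_divmod(2)[OF \<open>r \<noteq> 0\<close> qt] deg by simp
  then obtain t0 where t: "t = [:t0:]"
    by (metis degree_eq_zeroE less_one pCons_0_0)
  from arg_cong[OF div, of "\<lambda>p. poly (fract_poly p) z"] have "t = 0"
    by (simp add: root_r root_s t map_poly_pCons)
  have "r dvd [:lead_coeff r:] ^ k * s"
    by (simp add: div \<open>t = 0\<close>)
  also have "\<dots> dvd s * [:p:] ^ (n * k)"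
  proof -
    have "[:lead_coeff r:] ^ k dvd [:p:] ^ (n * k)"
      using dvd_power_same[OF lc, of k] by (simp add: const_poly_power power_mult)
    then show ?thesis
      by (metis mult.commute mult_dvd_mono dvd_refl)
  qed
  finally show ?thesis
    using dvd_mult_prime_elem_power_cancel[OF lift_prime_elem_poly[OF p] p_r] by blast
qed

lemma gen_ideal_Nil [simp]: "gen_ideal [] = {0}"
  by (simp add: gen_ideal_def)

lemma gen_ideal_Cons: "x \<in> gen_ideal (g # gs) \<longleftrightarrow> (\<exists>c y. y \<in> gen_ideal gs \<and> x = c * g + y)"
proof
  assume "x \<in> gen_ideal (g # gs)"
  then obtain c where x: "x = (\<Sum>i<length (g # gs). c i * (g # gs) ! i)"
    unfolding gen_ideal_def by blast
  have "x = c 0 * g + (\<Sum>i<length gs. c (Suc i) * gs ! i)"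
    unfolding x by (simp only: length_Cons sum.lessThan_Suc_shift nth_Cons_0 nth_Cons_Suc)
  moreover have "(\<Sum>i<length gs. c (Suc i) * gs ! i) \<in> gen_ideal gs"
    unfolding gen_ideal_def by (intro CollectI exI[of _ "\<lambda>i. c (Suc i)"]) simp
  ultimately show "\<exists>c y. y \<in> gen_ideal gs \<and> x = c * g + y"
    by blast
next
  assume "\<exists>c y. y \<in> gen_ideal gs \<and> x = c * g + y"
  then obtain c d where x: "x = c * g + (\<Sum>i<length gs. d i * gs ! i)"
    unfolding gen_ideal_def by blast
  have "x = (\<Sum>i<length (g # gs). (case i of 0 \<Rightarrow> c | Suc j \<Rightarrow> d j) * (g # gs) ! i)"
    unfolding x by (simp only: length_Cons sum.lessThan_Suc_shift nth_Cons_0 nth_Cons_Suc nat.case)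
  then show "x \<in> gen_ideal (g # gs)"
    unfolding gen_ideal_def by blast
qed

section \<open>The rings \<open>k[y1, y2]\<close> and \<open>k[y1, y2, y3]\<close>\<close>

text \<open>\<open>k[y1, y2, y3]\<close> serves twice: as \<open>A / (x4)\<close> via \<open>p \<mapsto> poly p 0\<close>, where \<open>yi\<close> is the
  image of \<open>xi\<close>, and as the subring \<open>k[x1, x4, x3]\<close> of \<open>A\<close> via \<open>iota\<close> below, where \<open>y2\<close>
  stands for \<open>x4\<close>.\<close>

definition Y1 :: "'k::comm_ring_1 poly poly poly" where "Y1 = [:[:[:0, 1:]:]:]"
definition Y2 :: "'k::comm_ring_1 poly poly poly" where "Y2 = [:[:0, 1:]:]"
definition Y3 :: "'k::comm_ring_1 poly poly poly" where "Y3 = [:0, 1:]"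
definition Z1 :: "'k::comm_ring_1 poly poly" where "Z1 = [:[:0, 1:]:]"
definition Z2 :: "'k::comm_ring_1 poly poly" where "Z2 = [:0, 1:]"

lemma X_eq_const_poly: "X1 = [:Y1:]" "X2 = [:Y2:]" "X3 = [:Y3:]"
  by (simp_all add: X1_def X2_def X3_def Y1_def Y2_def Y3_def)

lemma Y_eq_const_poly: "Y1 = [:Z1:]" "Y2 = [:Z2:]"
  by (simp_all add: Y1_def Y2_def Z1_def Z2_def)

lemma Y_nonzero [simp]: "Y1 \<noteq> 0" "Y2 \<noteq> 0" "Y3 \<noteq> 0"
  by (simp_all add: Y1_def Y2_def Y3_def)

lemma Z_nonzero [simp]: "Z1 \<noteq> 0" "Z2 \<noteq> 0"
  by (simp_all add: Z1_def Z2_def)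

lemma poly_X_0 [simp]: "poly X1 0 = Y1" "poly X2 0 = Y2" "poly X3 0 = Y3" "poly X4 0 = 0"
  by (simp_all add: X_eq_const_poly X4_def)

lemma prime_elem_Z1: "prime_elem (Z1 :: 'k::idom poly poly)"
  by (simp add: Z1_def lift_prime_elem_poly prime_elem_X)

lemma prime_elem_Y1: "prime_elem (Y1 :: 'k::idom poly poly poly)"
  by (simp add: Y_eq_const_poly lift_prime_elem_poly prime_elem_Z1)

lemma Z1_not_dvd_Z2_power: "\<not> Z1 dvd (Z2 :: 'k::idom poly poly) ^ n"
proof
  assume "Z1 dvd (Z2 :: 'k poly poly) ^ n"
  then have "[:[:0, 1:]:] dvd ([:0, 1:] :: 'k poly poly)"
    using prime_elem_dvd_power[OF prime_elem_Z1] by (simp add: Z1_def Z2_def)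
  then show False
    using prime_elem_not_unit[OF prime_elem_X[where 'a='k]] by (simp add: const_poly_dvd_X_iff)
qed

lemma Y1_not_dvd: "\<not> Y1 dvd (Y2 :: 'k::idom poly poly poly)" "\<not> Y1 dvd (Y3 :: 'k::idom poly poly poly)"
  using Z1_not_dvd_Z2_power[of 1] prime_elem_not_unit[OF prime_elem_Z1]
  by (simp_all add: Y_eq_const_poly Y3_def const_poly_dvd_X_iff)

lemma mpoly3_induct [case_names const Y1 Y2 Y3 add mult]:
  fixes P :: "'k::comm_ring_1 poly poly poly \<Rightarrow> bool"
  assumes const: "\<And>c. P [:[:[:c:]:]:]" and "P Y1" "P Y2" "P Y3"
    and P_add: "\<And>p q. P p \<Longrightarrow> P q \<Longrightarrow> P (p + q)"
    and P_mult: "\<And>p q. P p \<Longrightarrow> P q \<Longrightarrow> P (p * q)"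
  shows "P p"
proof -
  have P1: "P [:[:a:]:]" for a
  proof (induction a rule: poly_induct_ring)
    case (add p q) show ?case using P_add[OF add] by simp
  next
    case (mult p q) show ?case using P_mult[OF mult] by (simp add: mult.commute)
  qed (use const \<open>P Y1\<close> in \<open>simp_all add: Y1_def\<close>)
  have P2: "P [:a:]" for a
  proof (induction a rule: poly_induct_ring)
    case (add p q) show ?case using P_add[OF add] by simp
  next
    case (mult p q) show ?case using P_mult[OF mult] by (simp add: mult.commute)
  qed (use P1 \<open>P Y2\<close> in \<open>simp_all add: Y2_def\<close>)
  show "P p"
    by (induction p rule: poly_induct_ring) (use P2 \<open>P Y3\<close> P_add P_mult in \<open>simp_all add: Y3_def\<close>)
qed

lemma mpoly4_induct [case_names const X1 X2 X3 X4 add mult]: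
  fixes P :: "'k::comm_ring_1 mpoly4 \<Rightarrow> bool"
  assumes const: "\<And>c. P [:[:[:[:c:]:]:]:]" and "P X1" "P X2" "P X3" "P X4"
    and P_add: "\<And>p q. P p \<Longrightarrow> P q \<Longrightarrow> P (p + q)"
    and P_mult: "\<And>p q. P p \<Longrightarrow> P q \<Longrightarrow> P (p * q)"
  shows "P p"
proof -
  have P3: "P [:a:]" for a
  proof (induction a rule: mpoly3_induct)
    case (add p q) show ?case using P_add[OF add] by simp
  next
    case (mult p q) show ?case using P_mult[OF mult] by (simp add: mult.commute)
  qed (use const \<open>P X1\<close> \<open>P X2\<close> \<open>P X3\<close> in \<open>simp_all add: X_eq_const_poly\<close>)
  show "P p"
    by (induction p rule: poly_induct_ring) (use P3 \<open>P X4\<close> P_add P_mult in \<open>simp_all add: X4_def\<close>)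
qed

definition const4 :: "'k::comm_ring_1 \<Rightarrow> 'k mpoly4" where
  "const4 c = [:[:[:[:c:]:]:]:]"

lemma comm_ring_hom_const4: "comm_ring_hom const4"
  by unfold_locales (simp_all add: const4_def flip: pCons_one)

definition iota :: "'k::comm_ring_1 poly poly poly \<Rightarrow> 'k mpoly4" where
  "iota = eval_poly (eval_poly (eval_poly const4 X1) X4) X3"

interpretation iota: comm_ring_hom iota
  unfolding iota_def by (intro comm_ring_hom.comm_ring_hom_eval_poly comm_ring_hom_const4)

lemma iota_simps [simp]: "iota [:[:[:c:]:]:] = const4 c" "iota Y1 = X1" "iota Y2 = X4" "iota Y3 = X3"
  by (simp_all add: iota_def Y1_def Y2_def Y3_def comm_ring_hom_const4
      comm_ring_hom.eval_poly_pCons comm_ring_hom.comm_ring_hom_eval_poly comm_ring_hom.hom_0 comm_ring_hom.hom_1)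

section \<open>The ideal \<open>(g1, g2, g3)\<close>\<close>

definition g2 :: "'k::comm_ring_1 mpoly4" where "g2 = X1 ^ 5 * X4 - X2 ^ 3 * X3"

lemma poly_g2_0: "poly g2 0 = - (Y2 ^ 3 * Y3)"
  by (simp add: g2_def)

context
  fixes K m :: nat
begin

definition g1 :: "'k::comm_ring_1 mpoly4" where "g1 = - (X1 ^ (K + 3)) + X2 * X4 ^ m"
definition g3 :: "'k::comm_ring_1 mpoly4" where "g3 = X1 ^ K * X2 ^ 2 - X3 * X4 ^ m"

lemma poly_g1_0: "0 < m \<Longrightarrow> poly g1 0 = - (Y1 ^ (K + 3))"
  by (simp add: g1_def power_0_left)

lemma g1_dvd_X4_power_mult_cancel:
  assumes "0 < m" and "g1 dvd a * X4 ^ n"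
  shows "g1 dvd (a :: 'k::idom mpoly4)"
  using dvd_X_power_mult_cancel[of g1 a n] assms
  by (simp add: poly_g1_0 X4_def)

lemma X4_power_mult_in_ideal_g1_g2_cancel:
  assumes "0 < m" and "X4 ^ n * a = b * g1 + c * g2"
  shows "\<exists>b' c'. (a :: 'k::idom mpoly4) = b' * g1 + c' * g2"
proof (rule X_power_mult_in_ideal2_cancel)
  show "poly (g2 :: 'k mpoly4) 0 \<noteq> 0"
    by (simp add: poly_g2_0)
  have "\<not> Y1 dvd (Y2 ^ 3 * Y3 :: 'k poly poly poly)"
    by (metis Y1_not_dvd prime_elem_Y1 prime_elem_dvd_mult_iff prime_elem_dvd_power)
  then show "poly g2 0 dvd x * poly g1 0 \<Longrightarrow> poly g2 0 dvd x" for x :: "'k poly poly poly"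
    using dvd_mult_prime_elem_power_cancel[OF prime_elem_Y1, of "Y2 ^ 3 * Y3" x "K + 3"] assms(1)
    by (simp add: poly_g1_0 poly_g2_0)
  show "[:0, 1:] ^ n * a = b * g1 + c * g2"
    using assms(2) by (simp add: X4_def)
qed

text \<open>\<open>Phi\<close> maps \<open>A\<close> into the fraction field of \<open>k[y1, y2, y3]\<close> by \<open>x1, x3, x4 \<mapsto> y1, y3, y2\<close>
  and \<open>x2 \<mapsto> y1^(K+3) / y2^m\<close>: this realises \<open>A[1/x4] / (g1)\<close> as \<open>k[y1, y3, y2, 1/y2]\<close>.\<close>

definition Phi :: "'k::field mpoly4 \<Rightarrow> 'k poly poly poly fract" where
  "Phi = eval_poly (eval_poly (eval_poly (eval_poly (\<lambda>c. to_fract [:[:[:c:]:]:])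
     (to_fract Y1)) (to_fract Y1 ^ (K + 3) / to_fract Y2 ^ m)) (to_fract Y3)) (to_fract Y2)"

interpretation to_fract: comm_ring_hom "to_fract :: 'a::idom \<Rightarrow> 'a fract"
  by unfold_locales simp_all

lemma comm_ring_hom_to_fract_const: "comm_ring_hom (\<lambda>c::'k::field. to_fract [:[:[:c:]:]:])"
proof
  show "to_fract [:[:[:1:]:]:] = (1 :: 'k poly poly poly fract)"
    by (metis pCons_one to_fract_1)
qed (simp_all flip: to_fract_add to_fract_mult)

interpretation Phi: comm_ring_hom Phi
  unfolding Phi_def by (intro comm_ring_hom.comm_ring_hom_eval_poly comm_ring_hom_to_fract_const)

lemma Phi_simps [simp]:
  "Phi (const4 c) = to_fract [:[:[:c:]:]:]" "Phi X1 = to_fract Y1"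
  "Phi X2 = to_fract Y1 ^ (K + 3) / to_fract Y2 ^ m" "Phi X3 = to_fract Y3" "Phi X4 = to_fract Y2"
  by (simp_all add: Phi_def const4_def X1_def X2_def X3_def X4_def pCons_one comm_ring_hom_to_fract_const
      comm_ring_hom.eval_poly_pCons comm_ring_hom.comm_ring_hom_eval_poly comm_ring_hom.hom_0 comm_ring_hom.hom_1)

lemma Phi_iota [simp]: "Phi (iota q) = to_fract q"
  by (induction q rule: mpoly3_induct) simp_all

lemma Phi_g1 [simp]: "Phi g1 = 0"
  by (simp add: g1_def)

lemma X4_power_mult_eq_iota_mod_g1: "\<exists>e q s. X4 ^ e * p = iota q + s * (g1 :: 'k::field mpoly4)"
proof (induction p rule: mpoly4_induct)
  case (const c)
  have "X4 ^ 0 * [:[:[:[:c:]:]:]:] = iota [:[:[:c:]:]:] + 0 * g1"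
    by (simp add: const4_def)
  then show ?case by blast
next
  case X1
  have "X4 ^ 0 * X1 = iota Y1 + 0 * g1" by simp
  then show ?case by blast
next
  case X2
  have "X4 ^ m * X2 = iota (Y1 ^ (K + 3)) + 1 * g1"
    by (simp add: g1_def mult.commute)
  then show ?case by blast
next
  case X3
  have "X4 ^ 0 * X3 = iota Y3 + 0 * g1" by simp
  then show ?case by blast
next
  case X4
  have "X4 ^ 0 * X4 = iota Y2 + 0 * g1" by simp
  then show ?case by blast
next
  case (add p q)
  then obtain e1 q1 s1 e2 q2 s2 where p: "X4 ^ e1 * p = iota q1 + s1 * g1"
    and q: "X4 ^ e2 * q = iota q2 + s2 * g1" by blast
  have "X4 ^ (e1 + e2) * (p + q) = X4 ^ e2 * (X4 ^ e1 * p) + X4 ^ e1 * (X4 ^ e2 * q)"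
    by (simp add: algebra_simps power_add)
  also have "\<dots> = iota (Y2 ^ e2 * q1 + Y2 ^ e1 * q2) + (X4 ^ e2 * s1 + X4 ^ e1 * s2) * g1"
    unfolding p q by (simp add: algebra_simps)
  finally show ?case by blast
next
  case (mult p q)
  then obtain e1 q1 s1 e2 q2 s2 where p: "X4 ^ e1 * p = iota q1 + s1 * g1"
    and q: "X4 ^ e2 * q = iota q2 + s2 * g1" by blast
  have "X4 ^ (e1 + e2) * (p * q) = (X4 ^ e1 * p) * (X4 ^ e2 * q)"
    by (simp add: algebra_simps power_add)
  also have "\<dots> = iota (q1 * q2) + (s1 * iota q2 + iota q1 * s2 + s1 * s2 * g1) * g1"
    unfolding p q by (simp add: algebra_simps)
  finally show ?case by blast
qed

lemma Phi_eq_0_iff: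
  assumes "0 < m"
  shows "Phi a = 0 \<longleftrightarrow> g1 dvd (a :: 'k::field mpoly4)"
proof
  assume "Phi a = 0"
  obtain e q s where red: "X4 ^ e * a = iota q + s * g1"
    using X4_power_mult_eq_iota_mod_g1 by blast
  from arg_cong[OF red, of Phi] \<open>Phi a = 0\<close> have "q = 0"
    by simp
  with red have "g1 dvd a * X4 ^ e"
    by (simp add: mult.commute)
  then show "g1 dvd a"
    by (rule g1_dvd_X4_power_mult_cancel[OF assms])
qed (auto elim: dvdE)

definition r2 :: "'k::comm_ring_1 poly poly poly" where
  "r2 = Y2 ^ (3 * m + 1) - Y1 ^ (3 * K + 4) * Y3"

definition r3 :: "'k::comm_ring_1 poly poly poly" where
  "r3 = Y1 ^ (3 * K + 6) - Y3 * Y2 ^ (3 * m)"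

lemma Phi_g2: "Phi g2 * to_fract Y2 ^ (3 * m) = to_fract (Y1 ^ 5 * r2 :: 'k::field poly poly poly)"
proof -
  have "(y1 ^ 5 * y2 - (y1 ^ (K + 3) / y2 ^ m) ^ 3 * y3) * y2 ^ (3 * m)
      = y1 ^ 5 * (y2 ^ (3 * m + 1) - y1 ^ (3 * K + 4) * y3)" if "y2 \<noteq> 0" for y1 y2 y3 :: "'k poly poly poly fract"
    using that by (simp add: field_simps power_divide flip: power_mult power_add)
  then show ?thesis
    by (simp add: g2_def r2_def)
qed

lemma Phi_g3: "Phi g3 * to_fract Y2 ^ (2 * m) = to_fract (r3 :: 'k::field poly poly poly)"
proof -
  have "(y1 ^ K * (y1 ^ (K + 3) / y2 ^ m) ^ 2 - y3 * y2 ^ m) * y2 ^ (2 * m)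
      = y1 ^ (3 * K + 6) - y3 * y2 ^ (3 * m)" if "y2 \<noteq> 0" for y1 y2 y3 :: "'k poly poly poly fract"
    using that by (simp add: field_simps power_divide flip: power_mult power_add)
  then show ?thesis
    by (simp add: g3_def r3_def)
qed

definition r2_root :: "'k::field poly poly fract" where
  "r2_root = to_fract Z2 ^ (3 * m + 1) / to_fract Z1 ^ (3 * K + 4)"

lemma r2_eq: "r2 = [:Z2 ^ (3 * m + 1), - (Z1 ^ (3 * K + 4)):]"
  by (simp add: r2_def Y_eq_const_poly Y3_def const_poly_power)

lemma r3_eq: "r3 = [:Z1 ^ (3 * K + 6), - (Z2 ^ (3 * m)):]"
  by (simp add: r3_def Y_eq_const_poly Y3_def const_poly_power)

lemma r2_dvd_iff: "r2 dvd s \<longleftrightarrow> poly (fract_poly s) r2_root = (0 :: 'k::field poly poly fract)"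
proof
  have root: "poly (fract_poly r2) r2_root = (0 :: 'k poly poly fract)"
    by (simp add: r2_eq r2_root_def map_poly_pCons)
  show "poly (fract_poly s) r2_root = 0" if "r2 dvd s"
    using that root by (auto elim: dvdE)
  show "r2 dvd s" if "poly (fract_poly s) r2_root = 0"
  proof (rule linear_poly_dvd_of_common_root[OF _ prime_elem_Z1 _ _ root that])
    show "degree (r2 :: 'k poly poly poly) = 1" "lead_coeff (r2 :: 'k poly poly poly) dvd Z1 ^ (3 * K + 4)"
      by (simp_all add: r2_eq)
    show "\<not> [:Z1:] dvd (r2 :: 'k poly poly poly)"
    proof
      assume "[:Z1:] dvd (r2 :: 'k poly poly poly)"
      then have "Z1 dvd coeff (r2 :: 'k poly poly poly) 0"
        unfolding const_poly_dvd_iff by blast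
      then have "Z1 dvd (Z2 :: 'k poly poly) ^ (3 * m + 1)"
        by (simp add: r2_eq)
      with Z1_not_dvd_Z2_power show False
        by blast
    qed
  qed
qed

lemma degree_r2_r3: "degree (r2 :: 'k::idom poly poly poly) = 1" "degree (r3 :: 'k::idom poly poly poly) = 1"
  by (simp_all add: r2_eq r3_eq)

lemma r2_not_dvd_r3: "\<not> r2 dvd (r3 :: 'k::field poly poly poly)"
proof
  assume "r2 dvd (r3 :: 'k poly poly poly)"
  then obtain q where q: "r3 = r2 * (q :: 'k poly poly poly)" ..
  have "r2 \<noteq> (0 :: 'k poly poly poly)" "r3 \<noteq> (0 :: 'k poly poly poly)"
    by (simp_all add: r2_eq r3_eq)
  with q have "q \<noteq> 0"
    by auto
  have "degree (r3 :: 'k poly poly poly) = degree (r2 :: 'k poly poly poly) + degree q"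
    unfolding q using \<open>r2 \<noteq> 0\<close> \<open>q \<noteq> 0\<close> by (simp add: degree_mult_eq)
  then have "degree q = 0"
    by (simp add: degree_r2_r3)
  then obtain c where "q = [:c:]"
    by (rule degree_eq_zeroE)
  with q have "coeff r3 1 = coeff (r2 * [:c:]) 1"
    by simp
  then have "Z2 ^ (3 * m) = Z1 ^ (3 * K + 4) * c"
    by (simp add: r2_eq r3_eq mult.commute)
  moreover have "Z1 dvd Z1 ^ (3 * K + 4) * c"
    by (intro dvd_mult2 dvd_power) simp
  ultimately show False
    using Z1_not_dvd_Z2_power by metis
qed

lemma Y1_power_r2_dvd_cancel:
  assumes "Y1 ^ 5 * r2 dvd q * (r3 * Y2 ^ j)"
  shows "Y1 ^ 5 * r2 dvd (q :: 'k::field poly poly poly)"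
proof -
  define T :: "'k poly poly poly" where "T = r3 * Y2 ^ j"
  have "\<not> Y1 dvd (r3 :: 'k poly poly poly)"
  proof
    assume "Y1 dvd (r3 :: 'k poly poly poly)"
    then have "Z1 dvd coeff (r3 :: 'k poly poly poly) 1"
      unfolding Y_eq_const_poly const_poly_dvd_iff by blast
    then have "Z1 dvd (Z2 :: 'k poly poly) ^ (3 * m)"
      by (simp add: r3_eq)
    with Z1_not_dvd_Z2_power show False
      by blast
  qed
  then have "\<not> Y1 dvd T"
    by (metis T_def Y1_not_dvd(1) prime_elem_Y1 prime_elem_dvd_mult_iff prime_elem_dvd_power)
  moreover have "Y1 ^ 5 dvd q * T"
    using assms unfolding T_def by (metis dvd_mult_left)
  ultimately obtain s where q: "q = Y1 ^ 5 * s"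
    using prime_elem_power_dvd_mult_cancel[OF prime_elem_Y1] by blast
  with assms have "r2 dvd s * T"
    by (auto simp: T_def mult.assoc elim!: dvdE)
  moreover have "poly (fract_poly T) r2_root \<noteq> 0"
    using r2_not_dvd_r3 by (simp add: T_def Y_eq_const_poly const_poly_power map_poly_pCons r2_dvd_iff)
  ultimately have "r2 dvd s"
    by (simp add: r2_dvd_iff)
  then show ?thesis
    by (simp add: q)
qed

lemma Phi_g2_nonzero: "Phi g2 \<noteq> (0 :: 'k::field poly poly poly fract)"
proof -
  have "(r2 :: 'k poly poly poly) \<noteq> 0"
    by (simp add: r2_eq)
  then have "Phi g2 * to_fract Y2 ^ (3 * m) \<noteq> (0 :: 'k poly poly poly fract)"
    by (simp only: Phi_g2) simp
  then show ?thesis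
    by auto
qed

lemma g1_dvd_mult_g2_cancel:
  assumes "0 < m" and "g1 dvd a * g2"
  shows "g1 dvd (a :: 'k::field mpoly4)"
proof -
  have "Phi a * Phi g2 = 0"
    using assms by (simp add: Phi_eq_0_iff flip: Phi.hom_mult)
  with Phi_g2_nonzero[where 'k = 'k] have "Phi a = 0"
    by simp
  then show ?thesis
    using assms(1) by (simp add: Phi_eq_0_iff)
qed

text \<open>With \<open>u = x2 x4^m\<close> and \<open>w = x1^(K+3)\<close>, the lift of \<open>y1^5 r2\<close> equals
  \<open>x4^(3m) g2 + x3 (u^3 - w^3)\<close>, and \<open>u - w = g1\<close> divides \<open>u^3 - w^3\<close>.\<close>

lemma iota_Y1_power_r2: "\<exists>s. iota (Y1 ^ 5 * r2) = X4 ^ (3 * m) * g2 + s * (g1 :: 'k::field mpoly4)"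
proof
  define u w :: "'k mpoly4" where "u = X2 * X4 ^ m" and "w = X1 ^ (K + 3)"
  have u3: "u ^ 3 = X2 ^ 3 * X4 ^ (3 * m)"
    by (simp add: u_def power_mult_distrib mult.commute[of 3 m] flip: power_mult)
  have "w ^ 3 = X1 ^ ((K + 3) * 3)"
    by (simp only: w_def power_mult)
  also have "(K + 3) * 3 = 5 + (3 * K + 4)"
    by simp
  finally have w3: "w ^ 3 = X1 ^ 5 * X1 ^ (3 * K + 4)"
    by (simp only: power_add)
  show "iota (Y1 ^ 5 * r2) = X4 ^ (3 * m) * g2 + X3 * (u ^ 2 + u * w + w ^ 2) * g1"
    unfolding r2_def g1_def g2_def u_def[symmetric] w_def[symmetric]
    using u3 w3 by (simp add: algebra_simps power2_eq_square power3_eq_cube)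
qed

lemma Y1_power_r2_dvd_of_mult_g3:
  assumes eq: "a * g3 = b * g1 + c * g2" and a: "X4 ^ ea * a = iota qa + sa * g1"
  shows "Y1 ^ 5 * r2 dvd (qa :: 'k::field poly poly poly)"
proof -
  obtain ec qc sc where c: "X4 ^ ec * c = iota qc + sc * g1"
    using X4_power_mult_eq_iota_mod_g1 by blast
  define y where "y = to_fract (Y2 :: 'k poly poly poly)"
  have Phi_a: "to_fract qa = y ^ ea * Phi a" and Phi_c: "to_fract qc = y ^ ec * Phi c"
    using arg_cong[OF a, of Phi] arg_cong[OF c, of Phi] by (simp_all add: y_def)
  have r2: "to_fract (Y1 ^ 5 * r2) = Phi g2 * y ^ (3 * m)" and r3: "to_fract r3 = Phi g3 * y ^ (2 * m)"
    unfolding y_def by (simp_all only: Phi_g2 Phi_g3)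
  have "to_fract qa * to_fract r3 * y ^ (ec + 3 * m) = Phi a * Phi g3 * (y ^ (ea + ec) * y ^ (2 * m) * y ^ (3 * m))"
    unfolding Phi_a r3 by (simp add: power_add algebra_simps)
  also have "\<dots> = Phi c * Phi g2 * (y ^ (ea + ec) * y ^ (2 * m) * y ^ (3 * m))"
    using arg_cong[OF eq, of Phi] by simp
  also have "\<dots> = to_fract qc * y ^ (ea + 2 * m) * to_fract (Y1 ^ 5 * r2)"
    unfolding Phi_c r2 by (simp add: power_add algebra_simps)
  finally have "to_fract (qa * (r3 * Y2 ^ (ec + 3 * m))) = to_fract (qc * Y2 ^ (ea + 2 * m) * (Y1 ^ 5 * r2))"
    by (simp add: y_def mult.assoc)
  then have "qa * (r3 * Y2 ^ (ec + 3 * m)) = Y1 ^ 5 * r2 * (qc * Y2 ^ (ea + 2 * m))"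
    by (simp only: to_fract_eq_iff mult.commute)
  then have "Y1 ^ 5 * r2 dvd qa * (r3 * Y2 ^ (ec + 3 * m))"
    by (rule dvdI)
  then show ?thesis
    by (rule Y1_power_r2_dvd_cancel)
qed

lemma in_ideal_g1_g2_of_mult_g3:
  assumes m: "0 < m" and eq: "a * g3 = b * g1 + c * g2"
  shows "\<exists>b' c'. (a :: 'k::field mpoly4) = b' * g1 + c' * g2"
proof -
  obtain ea qa sa where a: "X4 ^ ea * a = iota qa + sa * g1"
    using X4_power_mult_eq_iota_mod_g1 by blast
  from eq a have "Y1 ^ 5 * r2 dvd qa"
    by (rule Y1_power_r2_dvd_of_mult_g3)
  then obtain v where qa: "qa = Y1 ^ 5 * r2 * v" ..
  obtain s :: "'k mpoly4" where "iota (Y1 ^ 5 * r2) = X4 ^ (3 * m) * g2 + s * g1"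
    using iota_Y1_power_r2 by blast
  with a qa have "X4 ^ ea * a = (s * iota v + sa) * g1 + (X4 ^ (3 * m) * iota v) * g2"
    by (simp add: algebra_simps)
  then show ?thesis
    by (rule X4_power_mult_in_ideal_g1_g2_cancel[OF m])
qed

lemma regular_sequence_g1_g2_g3:
  assumes m: "0 < m"
  shows "regular_sequence [g1, g2, g3 :: 'k::field mpoly4]"
  unfolding regular_sequence_def
proof (intro conjI allI impI)
  fix j and a :: "'k mpoly4"
  assume "j < length [g1, g2, g3 :: 'k mpoly4]"
    and mem: "a * [g1, g2, g3] ! j \<in> gen_ideal (take j [g1, g2, g3])"
  then consider "j = 0" | "j = 1" | "j = 2"
    by fastforce
  then show "a \<in> gen_ideal (take j [g1, g2, g3])"
  proof cases
    case 1
    have "poly (g1 :: 'k mpoly4) 0 \<noteq> 0"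
      by (simp add: poly_g1_0[OF m])
    then have "g1 \<noteq> (0 :: 'k mpoly4)"
      by auto
    with mem show ?thesis
      by (simp add: 1)
  next
    case 2
    with mem have "g1 dvd a * g2"
      by (auto simp: gen_ideal_Cons mult.commute)
    then have "g1 dvd a"
      by (rule g1_dvd_mult_g2_cancel[OF m])
    then show ?thesis
      by (auto simp: 2 gen_ideal_Cons mult.commute elim!: dvdE)
  next
    case 3
    with mem obtain b c where "a * g3 = b * g1 + c * g2"
      by (auto simp: gen_ideal_Cons numeral_2_eq_2)
    then obtain b' c' where "a = b' * g1 + c' * g2"
      using in_ideal_g1_g2_of_mult_g3[OF m] by blast
    then show ?thesis
      by (simp add: 3 gen_ideal_Cons numeral_2_eq_2) blast
  qed
next
  have "x \<notin> gen_ideal [g1, g2, g3 :: 'k mpoly4]" if "poly (poly (poly (poly x 0) 0) 0) 0 \<noteq> 0" for x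
    using that m by (auto simp: gen_ideal_Cons g1_def g2_def g3_def X1_def X2_def X3_def X4_def power_0_left)
  then show "1 \<notin> gen_ideal [g1, g2, g3 :: 'k mpoly4]"
    by simp
qed

end

theorem lemma5p3:
  fixes m d :: nat
  assumes "m > 0" and "d > 0"
  shows "regular_sequence
     [ - ((X1::'k::field mpoly4) ^ (4*m+d+2)) + X2 * X4 ^ m,
       X1 ^ 5 * X4 - X2 ^ 3 * X3,
       X1 ^ (4*m+d-1) * X2 ^ 2 - X3 * X4 ^ m
     ]"
proof -
  have "4 * m + d + 2 = (4 * m + d - 1) + 3"
    using assms(1) by simp
  then show ?thesis
    using regular_sequence_g1_g2_g3[OF assms(1), of "4 * m + d - 1"]
    by (simp only: g1_def g2_def g3_def)
qed

end
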